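(* Let $n\ge 2$ and $T\subset\mathbb{N}$, and suppose $\mathcal{P}_T$ is a PULB-space for dimension $n$ with quadrature rule given by nodes $\{\alpha_i\}_{i=1}^{\ell}$ and weights $\{\rho_i\}_{i=1}^{\ell}$ (as in the definition of PULB-space). Then for every potential $h$ that is absolutely monotone on $[-1,1]$, $$\max_{f\in\mathcal{L}(n,T,h)}f_0=\sum_{i=1}^{\ell}\rho_i h(\alpha_i).$$
   Context: $d\mu_n(t)=\gamma_n(1-t^2)^{(n-3)/2}dt$ is the probability measure on $[-1,1]$ with this density; $P_i^{(n)}$ is the Gegenbauer polynomial of degree $i$ (Jacobi with $\alpha=\beta=(n-3)/2$, normalized $P_i^{(n)}(1)=1$). $\mathcal{P}_T=\mathrm{span}\{P_i^{(n)}:i\in T\cup\{0\}\}$; $f_0=\int_{-1}^1 f\,d\mu_n$. A function $h:[-1,1]\to[0,+\infty]$, continuous on $[-1,1]$ and finite on $[-1,1)$, is absolutely monotone if $h^{(j)}(t)\ge0$ for all $j\ge0$ and $t\in[-1,1)$. $\mathcal{L}(n,T,h)=\{f\in\mathcal{P}_T: f(t)\le h(t)\ \forall t\in[-1,1]\}$. Nodes $\{\alpha_i\}\subset[-1,1]$ and weights $\{\rho_i\}\subset(0,1)$ form a quadrature rule exact on a linear space $\Lambda$ of polynomials if $\int_{-1}^1 f\,d\mu_n=\sum_i\rho_if(\alpha_i)$ for all $f\in\Lambda$. $\mathcal{P}_T$ is a PULB-space for dimension $n$ if (i) there is a quadrature rule with nodes in $[-1,1]$ and positive weights exact on $\mathcal{P}_T$,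 and (ii) for every absolutely monotone $h$ there exists $f\in\mathcal{L}(n,T,h)$ with $f=h$ at all nodes of that quadrature rule. *)

theory Defs
  imports "HOL-Analysis.Analysis"
begin

text \<open>Normalized Gegenbauer polynomials P_i^{(n)} (Jacobi with alpha = beta = (n-3)/2,
  normalized so that P_i^{(n)}(1) = 1), given by the standard three-term recurrence
  (i + n - 2) P_{i+1}(t) = (2i + n - 2) t P_i(t) - i P_{i-1}(t), P_0 = 1, P_1 = t.\<close>
fun geg :: "nat \<Rightarrow> nat \<Rightarrow> real \<Rightarrow> real" where
  "geg n 0 t = 1"
| "geg n (Suc 0) t = t"
| "geg n (Suc (Suc i)) t =
     ((2 * real (Suc i) + real n - 2) * t * geg n (Suc i) t - real (Suc i) * geg n i t)
       / (real (Suc i) + real n - 2)"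

definition wdens :: "nat \<Rightarrow> real \<Rightarrow> real" where
  "wdens n t = (1 - t\<^sup>2) powr ((real n - 3) / 2)"

definition gamma_n :: "nat \<Rightarrow> real" where
  "gamma_n n = 1 / (LBINT t=-1..1. wdens n t)"

definition f0 :: "nat \<Rightarrow> (real \<Rightarrow> real) \<Rightarrow> real" where
  "f0 n f = gamma_n n * (LBINT t=-1..1. f t * wdens n t)"

definition PT :: "nat \<Rightarrow> nat set \<Rightarrow> (real \<Rightarrow> real) set" where
  "PT n T = {f. \<exists>S c. finite S \<and> S \<subseteq> T \<union> {0} \<and>
                 f = (\<lambda>t. \<Sum>i\<in>S. c i * geg n i t)}"

definition abs_mono :: "(real \<Rightarrow> ereal) \<Rightarrow> bool" where
  "abs_mono h \<longleftrightarrow>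
     continuous_on {-1..1} h \<and>
     (\<forall>t\<in>{-1..1}. 0 \<le> h t) \<and>
     (\<forall>t\<in>{-1..<1}. h t \<noteq> \<infinity>) \<and>
     (\<exists>D :: nat \<Rightarrow> real \<Rightarrow> real.
        (\<forall>t\<in>{-1..<1}. ereal (D 0 t) = h t) \<and>
        (\<forall>j. \<forall>t\<in>{-1..<1}. (D j has_real_derivative D (Suc j) t) (at t within {-1..<1})) \<and>
        (\<forall>j. \<forall>t\<in>{-1..<1}. 0 \<le> D j t))"

definition LnTh :: "nat \<Rightarrow> nat set \<Rightarrow> (real \<Rightarrow> ereal) \<Rightarrow> (real \<Rightarrow> real) set" where
  "LnTh n T h = {f \<in> PT n T. \<forall>t\<in>{-1..1}. ereal (f t) \<le> h t}"

definition quad_rule :: "nat \<Rightarrow> (real \<Rightarrow> real) set \<Rightarrow> nat \<Rightarrow> (nat \<Rightarrow> real) \<Rightarrow> (nat \<Rightarrow> real) \<Rightarrow> bool" where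
  "quad_rule n Lam l \<alpha> \<rho> \<longleftrightarrow>
     (\<forall>i\<in>{1..l}. \<alpha> i \<in> {-1..1} \<and> \<rho> i \<in> {0<..<1}) \<and>
     (\<forall>f\<in>Lam. f0 n f = (\<Sum>i=1..l. \<rho> i * f (\<alpha> i)))"

definition PULB_with :: "nat \<Rightarrow> nat set \<Rightarrow> nat \<Rightarrow> (nat \<Rightarrow> real) \<Rightarrow> (nat \<Rightarrow> real) \<Rightarrow> bool" where
  "PULB_with n T l \<alpha> \<rho> \<longleftrightarrow>
     quad_rule n (PT n T) l \<alpha> \<rho> \<and>
     (\<forall>h. abs_mono h \<longrightarrow>
        (\<exists>f\<in>LnTh n T h. \<forall>i\<in>{1..l}. ereal (f (\<alpha> i)) = h (\<alpha> i)))"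

end

theory Submission
  imports Defs
begin

text \<open>Every admissible f lies below h on [-1,1], in particular at the nodes, so by exactness of
  the positive-weight quadrature on P_T its mean f_0 is at most the quadrature sum of h. The
  PULB property supplies an admissible f interpolating h at the nodes, which attains the bound.\<close>

lemma quad_rule_f0_eq_ereal_sum:
  assumes "quad_rule n Lam l \<alpha> \<rho>" and "f \<in> Lam"
  shows "ereal (f0 n f) = (\<Sum>i=1..l. ereal (\<rho> i) * ereal (f (\<alpha> i)))"
  using assms by (simp add: quad_rule_def sum_ereal)

lemma quad_rule_f0_le_sum:
  assumes quad: "quad_rule n Lam l \<alpha> \<rho>" and "f \<in> Lam"
    and below: "\<forall>t\<in>{-1..1}. ereal (f t) \<le> h t"
  shows "ereal (f0 n f) \<le> (\<Sum>i=1..l. ereal (\<rho> i) * h (\<alpha> i))"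
proof -
  have "ereal (f0 n f) = (\<Sum>i=1..l. ereal (\<rho> i) * ereal (f (\<alpha> i)))"
    using quad_rule_f0_eq_ereal_sum[OF quad \<open>f \<in> Lam\<close>] .
  also have "\<dots> \<le> (\<Sum>i=1..l. ereal (\<rho> i) * h (\<alpha> i))"
  proof (rule sum_mono)
    fix i assume "i \<in> {1..l}"
    then have "\<alpha> i \<in> {-1..1}" and "\<rho> i \<in> {0<..<1}"
      using quad by (simp_all add: quad_rule_def)
    then show "ereal (\<rho> i) * ereal (f (\<alpha> i)) \<le> ereal (\<rho> i) * h (\<alpha> i)"
      using below by (intro ereal_mult_left_mono) auto
  qed
  finally show ?thesis .
qed

lemma quad_rule_f0_eq_sum_if_interpolates:
  assumes quad: "quad_rule n Lam l \<alpha> \<rho>" and "f \<in> Lam"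
    and interp: "\<forall>i\<in>{1..l}. ereal (f (\<alpha> i)) = h (\<alpha> i)"
  shows "ereal (f0 n f) = (\<Sum>i=1..l. ereal (\<rho> i) * h (\<alpha> i))"
  using quad_rule_f0_eq_ereal_sum[OF quad \<open>f \<in> Lam\<close>] interp by simp

theorem theorem4p7:
  fixes n l :: nat and T :: "nat set" and \<alpha> \<rho> :: "nat \<Rightarrow> real" and h :: "real \<Rightarrow> ereal"
  assumes "n \<ge> 2"
    and "PULB_with n T l \<alpha> \<rho>"
    and "abs_mono h"
  shows "(\<exists>f\<in>LnTh n T h. ereal (f0 n f) = (\<Sum>i=1..l. ereal (\<rho> i) * h (\<alpha> i)))
       \<and> (\<forall>f\<in>LnTh n T h. ereal (f0 n f) \<le> (\<Sum>i=1..l. ereal (\<rho> i) * h (\<alpha> i)))"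
proof
  have quad: "quad_rule n (PT n T) l \<alpha> \<rho>"
    using assms(2) by (simp add: PULB_with_def)
  obtain f where f: "f \<in> LnTh n T h" and interp: "\<forall>i\<in>{1..l}. ereal (f (\<alpha> i)) = h (\<alpha> i)"
    using assms(2,3) by (auto simp: PULB_with_def)
  then show "\<exists>f\<in>LnTh n T h. ereal (f0 n f) = (\<Sum>i=1..l. ereal (\<rho> i) * h (\<alpha> i))"
    using quad_rule_f0_eq_sum_if_interpolates[OF quad] by (auto simp: LnTh_def)
  show "\<forall>f\<in>LnTh n T h. ereal (f0 n f) \<le> (\<Sum>i=1..l. ereal (\<rho> i) * h (\<alpha> i))"
    using quad_rule_f0_le_sum[OF quad] by (auto simp: LnTh_def)
qed

end
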